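(* In the setting of the context, for every fixed $j\ge0$, $$\pi_{i,j}\sim\frac{C^j\pi_{0,0}}{j!}\,i^{j}r_0^{\,i}\qquad\text{as } i\to\infty,$$ where $$C=\frac{q}{\bar q}\cdot\frac{\bar p\mu_hr_0^2+(p\mu_h+\bar p\bar\mu_h)r_0+p\bar\mu_h}{p\bar\mu_h-\bar p\mu_hr_0^2}.$$
   Context: Fix $p,q,\mu_h,\mu_l\in(0,1)$ with $p+q+\mu_h+\mu_l=1$ and $\mu_l\le\mu_h$. For real $x$ write $\bar x=1-x$; let $\rho=p/\mu_h+q/\mu_l$ and assume $\rho<1$. Let $(Q_1(n),Q_2(n))_{n\ge0}$ be the discrete-time Markov chain on $\mathbb{Z}_{\ge0}^2$ (numbers of high- and low-priority customers in a discrete-time preemptive priority queue, early arrival system) whose one-step transition probabilities from $(i,j)$ to $(i+k,j+l)$ are as follows (unlisted transitions have probability $0$). If $i\ge1$, $j\ge0$: $(k,l)=(1,0)$: $p\bar q\bar\mu_h$; $(1,1)$: $pq\bar\mu_h$; $(0,1)$: $pq\mu_h+\bar pq\bar\mu_h$; $(-1,1)$: $\bar pq\mu_h$; $(-1,0)$: $\bar p\bar q\mu_h$; $(0,0)$: $\bar p\bar q\bar\mu_h+p\bar q\mu_h$. If $i=0$, $j\ge1$: $(1,0)$: $p\bar q\bar\mu_h$; $(1,1)$: $pq\bar\mu_h$; $(0,1)$: $pq\mu_h+\bar pq\bar\mu_l$; $(0,-1)$: $\bar p\bar q\mu_l$; $(0,0)$: $\bar p\bar q\bar\mu_l+p\bar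 q\mu_h+\bar pq\mu_l$. If $(i,j)=(0,0)$: $(1,0)$: $p\bar q\bar\mu_h$; $(1,1)$: $pq\bar\mu_h$; $(0,1)$: $pq\mu_h+\bar pq\bar\mu_l$; $(0,0)$: $\bar p\bar q+p\bar q\mu_h+\bar pq\mu_l$. Let $(\pi_{i,j})_{i,j\ge0}$ be its stationary distribution; $f(n)\sim g(n)$ means $f(n)/g(n)\to1$. Let $r_0=1/x_1(0)$, where $x_1(0)=\frac{1-(p\mu_h+\bar p\bar\mu_h)\bar q+\sqrt{\Delta(0)}}{2p\bar\mu_h\bar q}$ with $\Delta(0)=(p\mu_h-\bar p\bar\mu_h)^2\bar q^2-2(p\mu_h+\bar p\bar\mu_h)\bar q+1>0$ and the positive square root. *)

theory Defs
  imports "HOL-Analysis.Analysis" "HOL-Library.Landau_Symbols"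
begin

text \<open>One-step transition probability from state s = (i,j) to state t of the
discrete-time preemptive priority queue (early arrival system).
Unlisted transitions have probability 0.\<close>

definition qtrans :: "real \<Rightarrow> real \<Rightarrow> real \<Rightarrow> real \<Rightarrow> nat \<times> nat \<Rightarrow> nat \<times> nat \<Rightarrow> real" where
  "qtrans p q mh ml s t =
    (let i = fst s; j = snd s;
         k = int (fst t) - int i; l = int (snd t) - int j in
     if i \<ge> 1 then
       (if (k, l) = (1, 0) then p * (1 - q) * (1 - mh)
        else if (k, l) = (1, 1) then p * q * (1 - mh)
        else if (k, l) = (0, 1) then p * q * mh + (1 - p) * q * (1 - mh)
        else if (k, l) = (-1, 1) then (1 - p) * q * mh
        else if (k, l) = (-1, 0) then (1 - p) * (1 - q) * mh
        else if (k, l) = (0, 0) then (1 - p) * (1 - q) * (1 - mh) + p * (1 - q) * mh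
        else 0)
     else if j \<ge> 1 then
       (if (k, l) = (1, 0) then p * (1 - q) * (1 - mh)
        else if (k, l) = (1, 1) then p * q * (1 - mh)
        else if (k, l) = (0, 1) then p * q * mh + (1 - p) * q * (1 - ml)
        else if (k, l) = (0, -1) then (1 - p) * (1 - q) * ml
        else if (k, l) = (0, 0) then (1 - p) * (1 - q) * (1 - ml) + p * (1 - q) * mh + (1 - p) * q * ml
        else 0)
     else
       (if (k, l) = (1, 0) then p * (1 - q) * (1 - mh)
        else if (k, l) = (1, 1) then p * q * (1 - mh)
        else if (k, l) = (0, 1) then p * q * mh + (1 - p) * q * (1 - ml)
        else if (k, l) = (0, 0) then (1 - p) * (1 - q) + p * (1 - q) * mh + (1 - p) * q * ml
        else 0))"

definition is_stationary ::
  "real \<Rightarrow> real \<Rightarrow> real \<Rightarrow> real \<Rightarrow> (nat \<Rightarrow> nat \<Rightarrow> real) \<Rightarrow> bool" where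
  "is_stationary p q mh ml \<pi> \<longleftrightarrow>
     (\<forall>i j. \<pi> i j \<ge> 0) \<and>
     ((\<lambda>(i, j). \<pi> i j) has_sum 1) UNIV \<and>
     (\<forall>i' j'. ((\<lambda>(i, j). \<pi> i j * qtrans p q mh ml (i, j) (i', j')) has_sum \<pi> i' j') UNIV)"

definition Delta0 :: "real \<Rightarrow> real \<Rightarrow> real \<Rightarrow> real" where
  "Delta0 p q mh = (p * mh - (1 - p) * (1 - mh))^2 * (1 - q)^2
                   - 2 * (p * mh + (1 - p) * (1 - mh)) * (1 - q) + 1"

definition x10 :: "real \<Rightarrow> real \<Rightarrow> real \<Rightarrow> real" where
  "x10 p q mh = (1 - (p * mh + (1 - p) * (1 - mh)) * (1 - q) + sqrt (Delta0 p q mh))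
                / (2 * p * (1 - mh) * (1 - q))"

definition r0 :: "real \<Rightarrow> real \<Rightarrow> real \<Rightarrow> real" where
  "r0 p q mh = 1 / x10 p q mh"

definition Cconst :: "real \<Rightarrow> real \<Rightarrow> real \<Rightarrow> real" where
  "Cconst p q mh = (let r = r0 p q mh in
     q / (1 - q) * (((1 - p) * mh * r^2 + (p * mh + (1 - p) * (1 - mh)) * r + p * (1 - mh))
                    / (p * (1 - mh) - (1 - p) * mh * r^2)))"

end

theory Submission
  imports Defs "HOL-Real_Asymp.Real_Asymp"
begin

text \<open>Row j of the balance equations is a second-order linear recurrence in the high-priority
level i, forced by row j - 1; its coefficients are the probabilities a, b, c that this level moves
up, moves down or stays, and the roots of b x^2 - (1 - c) x + a are r0 < 1 < r'. Rescaled by r0^i,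
the increments of row j satisfy a first-order recurrence with growth factor r' / r0 > 1, so, pi
being bounded, they are the backward sums of the forcing terms. Row 0 is unforced, hence
pi(i, 0) = pi(0, 0) r0^i. If row j behaves like K i^j r0^i, then by Tannery's theorem the
increments of row j + 1 behave like C K i^j, and Stolz-Cesaro sums them to C K i^(j+1) / (j + 1).\<close>

section \<open>Polynomially weighted sequences\<close>

lemma summable_power_div_geometric:
  fixes t :: real
  assumes "1 < t"
  shows "summable (\<lambda>k. real (Suc k) ^ m / t ^ k)"
proof (rule summable_comparison_test_bigo)
  show "summable (\<lambda>k. norm (inverse (real k ^ 2)))"
    using inverse_power_summable[of 2, where 'a = real] by simp
  show "(\<lambda>k. real (Suc k) ^ m / t ^ k) \<in> O(\<lambda>k. inverse (real k ^ 2))"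
    using assms by real_asymp
qed

lemma sums_div_power_Suc:
  fixes t :: real
  assumes "1 < t"
  shows "(\<lambda>k. c / t ^ Suc k) sums (c / (t - 1))"
proof -
  have "(\<lambda>k. c / t * (1 / t) ^ k) sums (c / t * (1 / (1 - 1 / t)))"
    using assms by (intro sums_mult geometric_sums) simp
  then show ?thesis
    using assms by (simp add: field_simps)
qed

lemma power_shift_ratio_le:
  assumes "0 < n"
  shows "real (n + k) ^ m / real n ^ m \<le> real (Suc k) ^ m"
proof -
  have "n + k \<le> n * Suc k"
    using assms by (cases n) auto
  then have "real (n + k) \<le> real n * real (Suc k)"
    by (metis of_nat_mono of_nat_mult)
  then have "real (n + k) ^ m \<le> (real n * real (Suc k)) ^ m"
    by (intro power_mono) auto
  then show ?thesis
    using assms by (simp add: divide_le_eq power_mult_distrib mult.commute)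
qed

lemma tendsto_shift_div_power:
  fixes X :: "nat \<Rightarrow> real"
  assumes "(\<lambda>n. X n / real n ^ m) \<longlonglongrightarrow> K"
  shows "(\<lambda>n. X (n + k) / real n ^ m) \<longlonglongrightarrow> K"
proof -
  have "(\<lambda>n. X (n + k) / real (n + k) ^ m * (real (n + k) ^ m / real n ^ m)) \<longlonglongrightarrow> K * 1"
    by (intro tendsto_mult LIMSEQ_ignore_initial_segment assms) real_asymp
  moreover have "\<forall>\<^sub>F n in sequentially.
      X (n + k) / real (n + k) ^ m * (real (n + k) ^ m / real n ^ m) = X (n + k) / real n ^ m"
    using eventually_gt_at_top[of 0] by eventually_elim simp
  ultimately show ?thesis
    by (simp add: Lim_transform_eventually)
qed

lemma tendsto_rescaled_three_term:
  fixes w :: "nat \<Rightarrow> real"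
  assumes "r \<noteq> 0" and w: "(\<lambda>n. w n / r ^ n / real n ^ m) \<longlonglongrightarrow> K"
  shows "(\<lambda>n. (\<alpha> * w n + \<beta> * w (Suc n) + \<gamma> * w (Suc (Suc n))) / r ^ Suc (Suc n) / real n ^ m)
    \<longlonglongrightarrow> (\<alpha> / r\<^sup>2 + \<beta> / r + \<gamma>) * K"
proof -
  have shifted: "(\<lambda>n. w (n + k) / r ^ (n + k) / real n ^ m) \<longlonglongrightarrow> K" for k
    using tendsto_shift_div_power[of "\<lambda>n. w n / r ^ n", OF w] by simp
  have "(\<lambda>n. \<alpha> / r\<^sup>2 * (w (n + 0) / r ^ (n + 0) / real n ^ m)
      + \<beta> / r * (w (n + 1) / r ^ (n + 1) / real n ^ m)
      + \<gamma> * (w (n + 2) / r ^ (n + 2) / real n ^ m)) \<longlonglongrightarrow> \<alpha> / r\<^sup>2 * K + \<beta> / r * K + \<gamma> * K"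
    by (intro tendsto_add tendsto_mult[OF tendsto_const shifted])
  moreover have "\<alpha> / r\<^sup>2 * (w (n + 0) / r ^ (n + 0) / real n ^ m)
      + \<beta> / r * (w (n + 1) / r ^ (n + 1) / real n ^ m)
      + \<gamma> * (w (n + 2) / r ^ (n + 2) / real n ^ m)
    = (\<alpha> * w n + \<beta> * w (Suc n) + \<gamma> * w (Suc (Suc n))) / r ^ Suc (Suc n) / real n ^ m" for n
  proof -
    have "\<alpha> / r\<^sup>2 * (w n / r ^ n * z) + \<beta> / r * (w (n + 1) / r ^ (n + 1) * z)
        + \<gamma> * (w (n + 2) / r ^ (n + 2) * z)
      = (\<alpha> * w n + \<beta> * w (Suc n) + \<gamma> * w (Suc (Suc n))) / r ^ Suc (Suc n) * z" for z
      using \<open>r \<noteq> 0\<close> by (simp add: field_simps power2_eq_square)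
    from this[of "inverse (real n ^ m)"] show ?thesis
      by (simp add: divide_inverse)
  qed
  moreover have "\<alpha> / r\<^sup>2 * K + \<beta> / r * K + \<gamma> * K = (\<alpha> / r\<^sup>2 + \<beta> / r + \<gamma>) * K"
    by (simp add: algebra_simps)
  ultimately show ?thesis
    by simp
qed

lemma power_Suc_difference_asymptotics:
  "(\<lambda>n. (real (Suc n) ^ Suc m - real n ^ Suc m) / real n ^ m) \<longlonglongrightarrow> real (Suc m)"
proof -
  have "(\<lambda>n. \<Sum>p<Suc m. real (Suc n) ^ p / real n ^ p) \<longlonglongrightarrow> (\<Sum>p<Suc m. 1)"
    by (intro tendsto_sum) real_asymp
  moreover have "\<forall>\<^sub>F n in sequentially. (\<Sum>p<Suc m. real (Suc n) ^ p / real n ^ p)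
      = (real (Suc n) ^ Suc m - real n ^ Suc m) / real n ^ m"
    using eventually_gt_at_top[of 0]
  proof eventually_elim
    case (elim n)
    have "(\<Sum>p<Suc m. real (Suc n) ^ p / real n ^ p)
        = (\<Sum>p<Suc m. real (Suc n) ^ p * real n ^ (m - p)) / real n ^ m"
    proof (unfold sum_divide_distrib, intro sum.cong refl)
      fix p
      assume "p \<in> {..<Suc m}"
      then have "real n ^ m = real n ^ p * real n ^ (m - p)"
        by (simp flip: power_add)
      then show "real (Suc n) ^ p / real n ^ p = real (Suc n) ^ p * real n ^ (m - p) / real n ^ m"
        using elim by simp
    qed
    also have "\<dots> = (real (Suc n) ^ Suc m - real n ^ Suc m) / real n ^ m"
      using diff_power_eq_sum[of "real (Suc n)" m "real n"] by simp
    finally show ?case .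
  qed
  ultimately show ?thesis
    by (simp add: Lim_transform_eventually)
qed

section \<open>The Stolz-Cesaro theorem\<close>

lemma stolz_cesaro_zero:
  fixes a b :: "nat \<Rightarrow> real"
  assumes incr: "\<And>n. b n < b (Suc n)" and unbounded: "filterlim b at_top sequentially"
    and lim: "(\<lambda>n. (a (Suc n) - a n) / (b (Suc n) - b n)) \<longlonglongrightarrow> 0"
  shows "(\<lambda>n. a n / b n) \<longlonglongrightarrow> 0"
proof (rule tendstoI)
  fix \<epsilon> :: real
  assume "0 < \<epsilon>"
  have "\<forall>\<^sub>F n in sequentially. \<bar>(a (Suc n) - a n) / (b (Suc n) - b n)\<bar> < \<epsilon> / 2 \<and> 0 < b n"
    using tendstoD[OF lim, of "\<epsilon> / 2"] \<open>0 < \<epsilon>\<close>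
      filterlim_at_top_dense[THEN iffD1, OF unbounded, rule_format, of 0]
    by (auto intro: eventually_conj)
  then obtain N where N: "\<And>n. N \<le> n \<Longrightarrow>
      \<bar>(a (Suc n) - a n) / (b (Suc n) - b n)\<bar> < \<epsilon> / 2 \<and> 0 < b n"
    unfolding eventually_sequentially by blast
  have step: "\<bar>a (Suc n) - a n\<bar> \<le> \<epsilon> / 2 * (b (Suc n) - b n)" if "N \<le> n" for n
  proof -
    have "0 < b (Suc n) - b n"
      using incr[of n] by simp
    then show ?thesis
      using N[OF that] by (simp add: pos_divide_less_eq)
  qed
  have telescope: "\<bar>a n - a N\<bar> \<le> \<epsilon> / 2 * (b n - b N)" if "N \<le> n" for n
  proof -
    have "\<bar>a n - a N\<bar> = \<bar>\<Sum>i = N..<n. a (Suc i) - a i\<bar>"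
      using that by (simp add: sum_Suc_diff')
    also have "\<dots> \<le> (\<Sum>i = N..<n. \<epsilon> / 2 * (b (Suc i) - b i))"
      using step by (intro order_trans[OF sum_abs sum_mono]) auto
    also have "\<dots> = \<epsilon> / 2 * (b n - b N)"
      by (simp only: sum_distrib_left[symmetric] sum_Suc_diff'[OF that])
    finally show ?thesis .
  qed
  have "(\<lambda>n. a N / b n) \<longlonglongrightarrow> 0"
    using filterlim_at_top_imp_at_infinity[OF unbounded] by (rule tendsto_divide_0[OF tendsto_const])
  then have "\<forall>\<^sub>F n in sequentially. \<bar>a N / b n\<bar> < \<epsilon> / 2"
    using \<open>0 < \<epsilon>\<close> by (auto dest: tendstoD[where e = "\<epsilon> / 2"])
  with eventually_ge_at_top[of N]
  show "\<forall>\<^sub>F n in sequentially. dist (a n / b n) 0 < \<epsilon>"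
  proof eventually_elim
    case (elim n)
    have "0 < b N" "0 < b n"
      using N elim by auto
    have "\<bar>a n / b n\<bar> \<le> \<bar>(a n - a N) / b n\<bar> + \<bar>a N / b n\<bar>"
      using abs_triangle_ineq[of "(a n - a N) / b n" "a N / b n"] by (simp add: diff_divide_distrib)
    also have "\<bar>(a n - a N) / b n\<bar> \<le> \<epsilon> / 2"
    proof -
      have "\<bar>a n - a N\<bar> \<le> \<epsilon> / 2 * b n"
        by (rule order_trans[OF telescope[OF \<open>N \<le> n\<close>] mult_left_mono])
          (use \<open>0 < b N\<close> \<open>0 < \<epsilon>\<close> in auto)
      then show ?thesis
        using \<open>0 < b n\<close> by (simp add: pos_divide_le_eq)
    qed
    finally show ?case
      using elim unfolding dist_real_def diff_zero by linarith
  qed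
qed

lemma stolz_cesaro:
  fixes a b :: "nat \<Rightarrow> real"
  assumes incr: "\<And>n. b n < b (Suc n)" and unbounded: "filterlim b at_top sequentially"
    and lim: "(\<lambda>n. (a (Suc n) - a n) / (b (Suc n) - b n)) \<longlonglongrightarrow> L"
  shows "(\<lambda>n. a n / b n) \<longlonglongrightarrow> L"
proof -
  have "(\<lambda>n. ((a (Suc n) - L * b (Suc n)) - (a n - L * b n)) / (b (Suc n) - b n)) \<longlonglongrightarrow> 0"
  proof (rule Lim_transform_eventually)
    show "(\<lambda>n. (a (Suc n) - a n) / (b (Suc n) - b n) - L) \<longlonglongrightarrow> 0"
      using tendsto_diff[OF lim tendsto_const[of L]] by simp
    show "\<forall>\<^sub>F n in sequentially. (a (Suc n) - a n) / (b (Suc n) - b n) - L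
        = ((a (Suc n) - L * b (Suc n)) - (a n - L * b n)) / (b (Suc n) - b n)"
    proof (intro always_eventually allI)
      fix n
      have "b (Suc n) - b n \<noteq> 0"
        using incr[of n] by simp
      then show "(a (Suc n) - a n) / (b (Suc n) - b n) - L
          = ((a (Suc n) - L * b (Suc n)) - (a n - L * b n)) / (b (Suc n) - b n)"
        by (simp add: field_simps)
    qed
  qed
  then have "(\<lambda>n. (a n - L * b n) / b n + L) \<longlonglongrightarrow> 0 + L"
    by (intro tendsto_add tendsto_const stolz_cesaro_zero[OF incr unbounded])
  moreover have "\<forall>\<^sub>F n in sequentially. (a n - L * b n) / b n + L = a n / b n"
    using filterlim_at_top_dense[THEN iffD1, OF unbounded, rule_format, of 0]
    by eventually_elim (simp add: field_simps)
  ultimately show ?thesis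
    by (simp add: Lim_transform_eventually)
qed

lemma tendsto_div_power_Suc_of_differences:
  fixes g d :: "nat \<Rightarrow> real"
  assumes diff: "\<And>n. g (Suc n) = g n + d n" and lim: "(\<lambda>n. d n / real n ^ m) \<longlonglongrightarrow> A"
  shows "(\<lambda>n. g n / real n ^ Suc m) \<longlonglongrightarrow> A / real (Suc m)"
proof (rule stolz_cesaro)
  show "real n ^ Suc m < real (Suc n) ^ Suc m" for n
    by (intro power_strict_mono) auto
  show "filterlim (\<lambda>n. real n ^ Suc m) at_top sequentially"
    by real_asymp
  have "(\<lambda>n. (d n / real n ^ m) / ((real (Suc n) ^ Suc m - real n ^ Suc m) / real n ^ m))
      \<longlonglongrightarrow> A / real (Suc m)"
    by (intro tendsto_divide lim power_Suc_difference_asymptotics) simp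
  moreover have "\<forall>\<^sub>F n in sequentially.
      (d n / real n ^ m) / ((real (Suc n) ^ Suc m - real n ^ Suc m) / real n ^ m)
      = (g (Suc n) - g n) / (real (Suc n) ^ Suc m - real n ^ Suc m)"
    using eventually_gt_at_top[of 0] by eventually_elim (simp add: diff)
  ultimately show "(\<lambda>n. (g (Suc n) - g n) / (real (Suc n) ^ Suc m - real n ^ Suc m))
      \<longlonglongrightarrow> A / real (Suc m)"
    by (simp add: Lim_transform_eventually)
qed

section \<open>First-order recurrences solved backwards\<close>

lemma backward_recurrence_sums:
  fixes d G :: "nat \<Rightarrow> real"
  assumes "t \<noteq> 0" and rec: "\<And>n. t * d n = d (Suc n) + G n"
    and null: "(\<lambda>k. d k / t ^ k) \<longlonglongrightarrow> 0"
  shows "(\<lambda>k. G (n + k) / t ^ Suc k) sums d n"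
proof -
  have partial: "(\<Sum>k<K. G (n + k) / t ^ Suc k) = d n - d (n + K) / t ^ K" for K
  proof (induction K)
    case (Suc K)
    have "G (n + K) = t * d (n + K) - d (n + Suc K)"
      using rec[of "n + K"] by simp
    then have "G (n + K) / t ^ Suc K = d (n + K) / t ^ K - d (n + Suc K) / t ^ Suc K"
      using \<open>t \<noteq> 0\<close> by (simp add: diff_divide_distrib)
    with Suc show ?case
      by simp
  qed simp
  have "(\<lambda>K. t ^ n * (d (K + n) / t ^ (K + n))) \<longlonglongrightarrow> t ^ n * 0"
    by (intro tendsto_mult_left LIMSEQ_ignore_initial_segment null)
  then have "(\<lambda>K. d (n + K) / t ^ K) \<longlonglongrightarrow> 0"
    using \<open>t \<noteq> 0\<close> by (simp add: power_add add.commute)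
  then have "(\<lambda>K. d n - d (n + K) / t ^ K) \<longlonglongrightarrow> d n - 0"
    by (intro tendsto_diff tendsto_const)
  then show ?thesis
    unfolding sums_def partial by simp
qed

lemma backward_recurrence_asymptotics:
  fixes d G :: "nat \<Rightarrow> real"
  assumes "1 < t" and rec: "\<And>n. t * d n = d (Suc n) + G n"
    and null: "(\<lambda>k. d k / t ^ k) \<longlonglongrightarrow> 0"
    and G: "(\<lambda>n. G n / real n ^ m) \<longlonglongrightarrow> L"
  shows "(\<lambda>n. d n / real n ^ m) \<longlonglongrightarrow> L / (t - 1)"
proof -
  define T where "T k n = G (n + k) / t ^ Suc k / real n ^ m" for k n
  obtain B where B: "\<And>n. \<bar>G n / real n ^ m\<bar> \<le> B"
    using convergent_imp_Bseq[OF convergentI[OF G]] by (auto simp: Bseq_def)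
  have "(\<lambda>n. T k n) \<longlonglongrightarrow> L / t ^ Suc k" for k
    using tendsto_divide[OF tendsto_shift_div_power[OF G, of k] tendsto_const, of "t ^ Suc k"]
      \<open>1 < t\<close>
    by (simp add: T_def field_simps)
  moreover have "\<bar>T k n\<bar> \<le> B * (real (Suc k) ^ m / t ^ k) / t" if "0 < n" for k n
  proof -
    have "\<bar>T k n\<bar> = \<bar>G (n + k) / real (n + k) ^ m\<bar> * (real (n + k) ^ m / real n ^ m) / t ^ Suc k"
      using that \<open>1 < t\<close> by (simp add: T_def abs_mult)
    also have "\<dots> \<le> B * real (Suc k) ^ m / t ^ Suc k"
      using B[of "n + k"] order_trans[OF abs_ge_zero B] power_shift_ratio_le[OF that] \<open>1 < t\<close>
      by (intro divide_right_mono mult_mono) auto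
    finally show ?thesis
      by (simp add: mult.commute)
  qed
  then have "\<forall>\<^sub>F (k, n) in at_top \<times>\<^sub>F sequentially.
      norm (T k n) \<le> B * (real (Suc k) ^ m / t ^ k) / t"
    unfolding eventually_prod_sequentially by (intro exI[of _ 1]) auto
  moreover have "summable (\<lambda>k. B * (real (Suc k) ^ m / t ^ k) / t)"
    by (intro summable_divide summable_mult summable_power_div_geometric \<open>1 < t\<close>)
  ultimately have "(\<lambda>n. \<Sum>k. T k n) \<longlonglongrightarrow> (\<Sum>k. L / t ^ Suc k)"
    by (intro tannerys_theorem[THEN conjunct2, THEN conjunct2]) simp_all
  moreover have "(\<Sum>k. T k n) = d n / real n ^ m" for n
    unfolding T_def using sums_divide[OF backward_recurrence_sums[OF _ rec null, of n]] \<open>1 < t\<close>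
    by (simp add: sums_iff)
  ultimately show ?thesis
    using sums_div_power_Suc[OF \<open>1 < t\<close>, of L] by (simp add: sums_iff)
qed

section \<open>Bounded solutions of birth-death recurrences\<close>

lemma inverse_larger_root:
  fixes a b K :: real
  assumes "0 < a" "0 < b" "a + b < K"
  defines "x \<equiv> (K + sqrt (K\<^sup>2 - 4 * a * b)) / (2 * a)"
  shows "0 < 1 / x" and "1 / x < 1" and "b * (1 / x)\<^sup>2 + a = K * (1 / x)"
proof -
  define R where "R = sqrt (K\<^sup>2 - 4 * a * b)"
  have "K\<^sup>2 - 4 * a * b = (2 * a - K)\<^sup>2 + 4 * a * (K - a - b)"
    by (simp add: power2_eq_square algebra_simps)
  then have sq_less: "\<bar>2 * a - K\<bar>\<^sup>2 < K\<^sup>2 - 4 * a * b"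
    using assms by simp
  then have R_gt: "\<bar>2 * a - K\<bar> < R"
    unfolding R_def by (rule real_less_rsqrt)
  have "0 < K\<^sup>2 - 4 * a * b"
    using sq_less zero_le_power2[of "\<bar>2 * a - K\<bar>"] by linarith
  then have R_sq: "R\<^sup>2 = K\<^sup>2 - 4 * a * b"
    by (simp add: R_def)
  have x_R: "2 * a * x = K + R"
    using \<open>0 < a\<close> by (simp add: x_def R_def)
  then have "2 * a * 1 < 2 * a * x"
    using R_gt by (simp add: abs_less_iff)
  then have "1 < x"
    using \<open>0 < a\<close> by simp
  moreover have "a * x\<^sup>2 + b = K * x"
  proof -
    have "4 * a * (a * x\<^sup>2 + b - K * x) = (2 * a * x)\<^sup>2 - 2 * K * (2 * a * x) + 4 * a * b"
      by (simp add: power2_eq_square algebra_simps)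
    also have "\<dots> = R\<^sup>2 - K\<^sup>2 + 4 * a * b"
      unfolding x_R by (simp add: power2_eq_square algebra_simps)
    finally show ?thesis
      using R_sq \<open>0 < a\<close> by simp
  qed
  ultimately show "0 < 1 / x" "1 / x < 1" "b * (1 / x)\<^sup>2 + a = K * (1 / x)"
    by (simp_all add: field_simps power2_eq_square)
qed

locale birth_death_recurrence =
  fixes a b c r :: real
  assumes a_pos: "0 < a" and b_pos: "0 < b" and r_pos: "0 < r" and r_less_1: "r < 1"
    and r_root: "b * r\<^sup>2 + a = (1 - c) * r"
    and drift: "a + b < 1 - c"
begin

text \<open>The quotient of the two roots of \<open>b x\<^sup>2 - (1 - c) x + a\<close>, the larger one being \<open>a / (b r)\<close>.\<close>

definition ratio :: real where
  "ratio = a / (b * r\<^sup>2)"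

lemma one_minus_c_eq: "1 - c = b * r + a / r"
  using r_root r_pos by (simp add: field_simps power2_eq_square)

lemma ratio_times_r_gt_1: "1 < ratio * r"
proof -
  have "b * (1 - r) * (1 - ratio * r) = a + b - (1 - c)"
    using r_pos b_pos unfolding one_minus_c_eq ratio_def by (simp add: field_simps power2_eq_square)
  then have "b * (1 - r) * (1 - ratio * r) < 0"
    using drift by simp
  then show ?thesis
    using b_pos r_less_1 by (simp add: mult_less_0_iff)
qed

lemma ratio_gt_1: "1 < ratio"
proof -
  have "0 < ratio"
    using a_pos b_pos r_pos by (simp add: ratio_def)
  then have "ratio * r < ratio"
    using r_less_1 by simp
  with ratio_times_r_gt_1 show ?thesis
    by linarith
qed

lemma root_gap_pos: "0 < a - b * r\<^sup>2"
proof -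
  have "a - b * r\<^sup>2 = b * r\<^sup>2 * (ratio - 1)"
    using b_pos r_pos by (simp add: ratio_def field_simps)
  then show ?thesis
    using b_pos r_pos ratio_gt_1 by simp
qed

lemma rescaled_increment_recurrence:
  assumes "u (Suc n) = a * u n + b * u (Suc (Suc n)) + c * u (Suc n) + f"
  shows "ratio * (u (Suc n) / r ^ Suc n - u n / r ^ n)
    = (u (Suc (Suc n)) / r ^ Suc (Suc n) - u (Suc n) / r ^ Suc n) + f / r ^ Suc (Suc n) / b"
proof -
  have f: "f = (b * r + a / r) * u (Suc n) - a * u n - b * u (Suc (Suc n))"
    using assms unfolding one_minus_c_eq[symmetric] by (simp add: algebra_simps)
  show ?thesis
    unfolding f using b_pos r_pos by (simp add: ratio_def field_simps power2_eq_square)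
qed

lemma rescaled_increment_null:
  assumes "Bseq u"
  shows "(\<lambda>k. (u (Suc k) / r ^ Suc k - u k / r ^ k) / ratio ^ k) \<longlonglongrightarrow> 0"
proof -
  obtain M where M: "\<And>k. \<bar>u k\<bar> \<le> M"
    using assms by (auto simp: Bseq_def)
  define s where "s = ratio * r"
  have "1 < s"
    using ratio_times_r_gt_1 by (simp add: s_def)
  have "(\<lambda>k. u k / r ^ k / ratio ^ k) \<longlonglongrightarrow> 0"
  proof (rule Lim_null_comparison)
    have "norm (u k / r ^ k / ratio ^ k) = \<bar>u k\<bar> / s ^ k" for k
      using r_pos ratio_gt_1 by (simp add: s_def power_mult_distrib mult.commute)
    also have "\<dots> k \<le> M / s ^ k" for k
      using M \<open>1 < s\<close> by (simp add: divide_right_mono)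
    finally show "\<forall>\<^sub>F k in sequentially. norm (u k / r ^ k / ratio ^ k) \<le> M / s ^ k"
      by simp
    show "(\<lambda>k. M / s ^ k) \<longlonglongrightarrow> 0"
      using \<open>1 < s\<close> by real_asymp
  qed
  then have "(\<lambda>k. ratio * (u (Suc k) / r ^ Suc k / ratio ^ Suc k) - u k / r ^ k / ratio ^ k)
      \<longlonglongrightarrow> ratio * 0 - 0"
    by (intro tendsto_intros LIMSEQ_Suc)
  then show ?thesis
    using ratio_gt_1 by (simp add: diff_divide_distrib mult_ac)
qed

lemma bounded_homogeneous_solution:
  assumes "Bseq u" and rec: "\<And>n. u (Suc n) = a * u n + b * u (Suc (Suc n)) + c * u (Suc n)"
  shows "u n = u 0 * r ^ n"
proof -
  define d where "d n = u (Suc n) / r ^ Suc n - u n / r ^ n" for n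
  have drec: "ratio * d n = d (Suc n) + 0" for n
    unfolding d_def using rescaled_increment_recurrence[of u n 0] rec by simp
  have null: "(\<lambda>k. d k / ratio ^ k) \<longlonglongrightarrow> 0"
    unfolding d_def by (rule rescaled_increment_null[OF assms(1)])
  have d_zero: "d n = 0" for n
  proof -
    have "(\<lambda>k. 0) sums d n"
      using backward_recurrence_sums[OF _ drec null, of n] ratio_gt_1 by simp
    then show ?thesis
      using sums_zero by (rule sums_unique2)
  qed
  have "u n / r ^ n = u 0"
  proof (induction n)
    case (Suc n)
    then show ?case
      using d_zero[of n] by (simp add: d_def)
  qed simp
  then show ?thesis
    using r_pos by (simp add: field_simps)
qed

lemma bounded_forced_solution_asymptotics:
  assumes "Bseq u"
    and rec: "\<And>n. u (Suc n) = a * u n + b * u (Suc (Suc n)) + c * u (Suc n)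
      + (\<alpha> * w n + \<beta> * w (Suc n) + \<gamma> * w (Suc (Suc n)))"
    and w: "(\<lambda>n. w n / r ^ n / real n ^ m) \<longlonglongrightarrow> K"
  shows "(\<lambda>n. u n / r ^ n / real n ^ Suc m)
    \<longlonglongrightarrow> K * ((\<alpha> + \<beta> * r + \<gamma> * r\<^sup>2) / (a - b * r\<^sup>2)) / real (Suc m)"
proof -
  define d where "d n = u (Suc n) / r ^ Suc n - u n / r ^ n" for n
  define G where "G n = (\<alpha> * w n + \<beta> * w (Suc n) + \<gamma> * w (Suc (Suc n))) / r ^ Suc (Suc n) / b" for n
  define L where "L = (\<alpha> / r\<^sup>2 + \<beta> / r + \<gamma>) * K / b"
  have drec: "ratio * d n = d (Suc n) + G n" for n
    unfolding d_def G_def by (rule rescaled_increment_recurrence) (rule rec)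
  have null: "(\<lambda>k. d k / ratio ^ k) \<longlonglongrightarrow> 0"
    unfolding d_def by (rule rescaled_increment_null[OF assms(1)])
  have "(\<lambda>n. G n / real n ^ m) \<longlonglongrightarrow> L"
    using tendsto_divide[OF tendsto_rescaled_three_term[OF _ w] tendsto_const, of b] r_pos b_pos
    by (simp add: G_def L_def mult_ac)
  then have "(\<lambda>n. d n / real n ^ m) \<longlonglongrightarrow> L / (ratio - 1)"
    by (rule backward_recurrence_asymptotics[OF ratio_gt_1 drec null])
  then have "(\<lambda>n. u n / r ^ n / real n ^ Suc m) \<longlonglongrightarrow> L / (ratio - 1) / real (Suc m)"
    by (rule tendsto_div_power_Suc_of_differences[rotated]) (simp add: d_def)
  moreover have "L / (ratio - 1) = K * ((\<alpha> + \<beta> * r + \<gamma> * r\<^sup>2) / (a - b * r\<^sup>2))"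
  proof -
    have "ratio - 1 = (a - b * r\<^sup>2) / (b * r\<^sup>2)"
      using b_pos r_pos by (simp add: ratio_def diff_divide_distrib)
    moreover have "L * (b * r\<^sup>2) = K * (\<alpha> + \<beta> * r + \<gamma> * r\<^sup>2)"
      using b_pos r_pos by (simp add: L_def field_simps power2_eq_square)
    ultimately show ?thesis
      using b_pos r_pos root_gap_pos by simp
  qed
  ultimately show ?thesis
    by simp
qed

end

section \<open>The priority queue\<close>

lemma r0_birth_death_recurrence:
  assumes "0 < p" "p < 1" "0 < q" "q < 1" "0 < mh" "mh < 1"
  shows "birth_death_recurrence (p * (1 - q) * (1 - mh)) ((1 - p) * (1 - q) * mh)
    ((1 - p) * (1 - q) * (1 - mh) + p * (1 - q) * mh) (r0 p q mh)"
proof -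
  define a where "a = p * (1 - q) * (1 - mh)"
  define b where "b = (1 - p) * (1 - q) * mh"
  define K where "K = 1 - ((1 - p) * (1 - q) * (1 - mh) + p * (1 - q) * mh)"
  have "0 < a" "0 < b"
    using assms by (simp_all add: a_def b_def)
  moreover have "a + b < K"
    using \<open>0 < q\<close> by (simp add: a_def b_def K_def algebra_simps)
  moreover have "r0 p q mh = 1 / ((K + sqrt (K\<^sup>2 - 4 * a * b)) / (2 * a))"
  proof -
    have "Delta0 p q mh = K\<^sup>2 - 4 * a * b"
      by (simp add: Delta0_def a_def b_def K_def power2_eq_square algebra_simps)
    then show ?thesis
      by (simp add: r0_def x10_def a_def K_def algebra_simps)
  qed
  ultimately show ?thesis
    using inverse_larger_root[of a b K]
    by unfold_locales (simp_all add: a_def b_def K_def)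
qed

lemma Cconst_eq:
  "Cconst p q mh = (p * q * (1 - mh) + (p * q * mh + (1 - p) * q * (1 - mh)) * r0 p q mh
      + (1 - p) * q * mh * (r0 p q mh)\<^sup>2)
    / (p * (1 - q) * (1 - mh) - (1 - p) * (1 - q) * mh * (r0 p q mh)\<^sup>2)"
proof -
  have "p * q * (1 - mh) + (p * q * mh + (1 - p) * q * (1 - mh)) * r0 p q mh
      + (1 - p) * q * mh * (r0 p q mh)\<^sup>2
    = q * ((1 - p) * mh * (r0 p q mh)\<^sup>2 + (p * mh + (1 - p) * (1 - mh)) * r0 p q mh + p * (1 - mh))"
    by (simp add: algebra_simps)
  moreover have "p * (1 - q) * (1 - mh) - (1 - p) * (1 - q) * mh * (r0 p q mh)\<^sup>2
    = (1 - q) * (p * (1 - mh) - (1 - p) * mh * (r0 p q mh)\<^sup>2)"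
    by (simp add: algebra_simps)
  ultimately show ?thesis
    by (simp add: Cconst_def Let_def)
qed

lemma Cconst_pos:
  assumes "0 < p" "p < 1" "0 < q" "q < 1" "0 < mh" "mh < 1"
  shows "0 < Cconst p q mh"
proof -
  interpret birth_death_recurrence "p * (1 - q) * (1 - mh)" "(1 - p) * (1 - q) * mh"
    "(1 - p) * (1 - q) * (1 - mh) + p * (1 - q) * mh" "r0 p q mh"
    using assms by (intro r0_birth_death_recurrence)
  show ?thesis
    unfolding Cconst_eq using assms r_pos root_gap_pos
    by (intro divide_pos_pos add_pos_pos mult_pos_pos) auto
qed

lemma qtrans_right: "qtrans p q mh ml (n, j) (Suc n, j) = p * (1 - q) * (1 - mh)"
  by (auto simp: qtrans_def Let_def)

lemma qtrans_left: "qtrans p q mh ml (Suc (Suc n), j) (Suc n, j) = (1 - p) * (1 - q) * mh"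
  by (auto simp: qtrans_def Let_def)

lemma qtrans_stay:
  "qtrans p q mh ml (Suc n, j) (Suc n, j) = (1 - p) * (1 - q) * (1 - mh) + p * (1 - q) * mh"
  by (auto simp: qtrans_def Let_def)

lemma qtrans_up_right: "qtrans p q mh ml (n, j) (Suc n, Suc j) = p * q * (1 - mh)"
  by (auto simp: qtrans_def Let_def)

lemma qtrans_up: "qtrans p q mh ml (Suc n, j) (Suc n, Suc j) = p * q * mh + (1 - p) * q * (1 - mh)"
  by (auto simp: qtrans_def Let_def)

lemma qtrans_up_left: "qtrans p q mh ml (Suc (Suc n), j) (Suc n, Suc j) = (1 - p) * q * mh"
  by (auto simp: qtrans_def Let_def)

lemma qtrans_left_border: "qtrans p q mh ml (Suc 0, j) (0, j) = (1 - p) * (1 - q) * mh"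
  by (auto simp: qtrans_def Let_def)

lemma qtrans_down_border: "qtrans p q mh ml (0, Suc j) (0, j) = (1 - p) * (1 - q) * ml"
  by (auto simp: qtrans_def Let_def)

lemma qtrans_into_Suc_nonzero:
  assumes "qtrans p q mh ml (i, j) (Suc n, j') \<noteq> 0"
  shows "i \<in> {n, Suc n, Suc (Suc n)} \<and> j' \<in> {j, Suc j}"
  using assms by (auto simp: qtrans_def Let_def split: if_splits)

lemma qtrans_nonneg:
  assumes "0 \<le> p" "p \<le> 1" "0 \<le> q" "q \<le> 1" "0 \<le> mh" "mh \<le> 1" "0 \<le> ml" "ml \<le> 1"
  shows "0 \<le> qtrans p q mh ml s t"
  using assms by (simp add: qtrans_def Let_def)

lemma stationary_nonneg: "is_stationary p q mh ml \<pi> \<Longrightarrow> 0 \<le> \<pi> i j"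
  by (simp add: is_stationary_def)

lemma stationary_le_1:
  assumes "is_stationary p q mh ml \<pi>"
  shows "\<pi> i j \<le> 1"
proof -
  have "((\<lambda>(x, y). \<pi> x y) has_sum \<pi> i j) {(i, j)}"
    using has_sum_finite[of "{(i, j)}" "\<lambda>(x, y). \<pi> x y"] by simp
  moreover have "((\<lambda>(x, y). \<pi> x y) has_sum 1) UNIV"
    using assms by (simp add: is_stationary_def)
  ultimately show ?thesis
    by (rule has_sum_mono_neutral) (auto simp: stationary_nonneg[OF assms])
qed

lemma stationary_row_bounded: "is_stationary p q mh ml \<pi> \<Longrightarrow> Bseq (\<lambda>i. \<pi> i j)"
  by (rule BseqI'[of _ 1]) (simp add: stationary_nonneg stationary_le_1)

lemma stationary_inflow_le:
  assumes st: "is_stationary p q mh ml \<pi>" and qtrans: "\<And>s t. 0 \<le> qtrans p q mh ml s t"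
  shows "\<pi> a b * qtrans p q mh ml (a, b) (i, j) \<le> \<pi> i j"
proof -
  let ?h = "\<lambda>(x, y). \<pi> x y * qtrans p q mh ml (x, y) (i, j)"
  have "(?h has_sum ?h (a, b)) {(a, b)}"
    using has_sum_finite[of "{(a, b)}" ?h] by simp
  moreover have "(?h has_sum \<pi> i j) UNIV"
    using st by (simp add: is_stationary_def)
  ultimately have "?h (a, b) \<le> \<pi> i j"
    by (rule has_sum_mono_neutral) (auto intro!: mult_nonneg_nonneg stationary_nonneg[OF st] qtrans)
  then show ?thesis
    by simp
qed

lemma stationary_balance:
  assumes st: "is_stationary p q mh ml \<pi>" and "finite B"
    and sources: "\<And>i j. i \<in> {n, Suc n, Suc (Suc n)} \<Longrightarrow> j' \<in> {j, Suc j} \<Longrightarrow> (i, j) \<in> B"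
  shows "\<pi> (Suc n) j' = (\<Sum>(i, j)\<in>B. \<pi> i j * qtrans p q mh ml (i, j) (Suc n, j'))"
proof -
  let ?h = "\<lambda>(i, j). \<pi> i j * qtrans p q mh ml (i, j) (Suc n, j')"
  have "(?h has_sum \<pi> (Suc n) j') UNIV"
    using st by (simp add: is_stationary_def)
  moreover have "(?h has_sum (\<Sum>x\<in>B. ?h x)) UNIV"
  proof (rule has_sum_finite_neutralI[OF \<open>finite B\<close>])
    fix x
    assume "x \<in> UNIV - B"
    then obtain i j where x: "x = (i, j)" and "(i, j) \<notin> B"
      by (cases x) auto
    then have "qtrans p q mh ml (i, j) (Suc n, j') = 0"
      using qtrans_into_Suc_nonzero sources by blast
    then show "?h x = 0"
      by (simp add: x)
  qed simp_all
  ultimately show ?thesis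
    by (rule has_sum_unique)
qed

lemma stationary_balance_row_0:
  assumes "is_stationary p q mh ml \<pi>"
  shows "\<pi> (Suc n) 0 = p * (1 - q) * (1 - mh) * \<pi> n 0 + (1 - p) * (1 - q) * mh * \<pi> (Suc (Suc n)) 0
    + ((1 - p) * (1 - q) * (1 - mh) + p * (1 - q) * mh) * \<pi> (Suc n) 0"
proof -
  have "\<pi> (Suc n) 0 = (\<Sum>(i, j)\<in>{(n, 0), (Suc n, 0), (Suc (Suc n), 0)}.
      \<pi> i j * qtrans p q mh ml (i, j) (Suc n, 0))"
    by (rule stationary_balance[OF assms]) auto
  then show ?thesis
    by (simp add: qtrans_right qtrans_left qtrans_stay algebra_simps)
qed

lemma stationary_balance_row_Suc:
  assumes "is_stationary p q mh ml \<pi>"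
  shows "\<pi> (Suc n) (Suc j) = p * (1 - q) * (1 - mh) * \<pi> n (Suc j)
    + (1 - p) * (1 - q) * mh * \<pi> (Suc (Suc n)) (Suc j)
    + ((1 - p) * (1 - q) * (1 - mh) + p * (1 - q) * mh) * \<pi> (Suc n) (Suc j)
    + (p * q * (1 - mh) * \<pi> n j + (p * q * mh + (1 - p) * q * (1 - mh)) * \<pi> (Suc n) j
       + (1 - p) * q * mh * \<pi> (Suc (Suc n)) j)"
proof -
  have "\<pi> (Suc n) (Suc j) = (\<Sum>(i, j')\<in>{n, Suc n, Suc (Suc n)} \<times> {j, Suc j}.
      \<pi> i j' * qtrans p q mh ml (i, j') (Suc n, Suc j))"
    by (rule stationary_balance[OF assms]) auto
  then show ?thesis
    by (simp add: qtrans_right qtrans_left qtrans_stay qtrans_up_right qtrans_up qtrans_up_left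
        algebra_simps)
qed

lemma stationary_origin_pos:
  assumes "0 < p" "p < 1" "0 < q" "q < 1" "0 < mh" "mh < 1" "0 < ml" "ml < 1"
    and st: "is_stationary p q mh ml \<pi>"
  shows "0 < \<pi> 0 0"
proof (rule ccontr)
  assume "\<not> 0 < \<pi> 0 0"
  then have origin: "\<pi> 0 0 = 0"
    using stationary_nonneg[OF st, of 0 0] by simp
  have qtrans: "0 \<le> qtrans p q mh ml s t" for s t
    using assms by (intro qtrans_nonneg) auto
  have zero_if_feeds_zero: "\<pi> i j = 0" if "0 < qtrans p q mh ml (i, j) (i', j')" "\<pi> i' j' = 0"
    for i j i' j'
  proof -
    have "\<pi> i j * qtrans p q mh ml (i, j) (i', j') \<le> 0"
      using stationary_inflow_le[OF st qtrans, of i j i' j'] that(2) by simp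
    then have "\<pi> i j \<le> 0"
      using that(1) by (simp add: mult_le_0_iff)
    then show ?thesis
      using stationary_nonneg[OF st, of i j] by simp
  qed
  have column_0: "\<pi> 0 j = 0" for j
  proof (induction j)
    case (Suc j)
    show ?case
      by (rule zero_if_feeds_zero[OF _ Suc]) (use assms in \<open>simp add: qtrans_down_border\<close>)
  qed (fact origin)
  have all: "\<pi> i j = 0" for i j
  proof (induction i)
    case (Suc i)
    show ?case
    proof (rule zero_if_feeds_zero[OF _ Suc])
      show "0 < qtrans p q mh ml (Suc i, j) (i, j)"
        using assms by (cases i) (simp_all add: qtrans_left qtrans_left_border)
    qed
  qed (fact column_0)
  have "((\<lambda>(i, j). \<pi> i j) has_sum 1) UNIV"
    using st by (simp add: is_stationary_def)
  moreover have "((\<lambda>(i, j). \<pi> i j) has_sum 0) UNIV"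
    by (rule has_sum_0) (auto simp: all)
  ultimately have "(1::real) = 0"
    by (rule has_sum_unique)
  then show False
    by simp
qed

lemma stationary_row_asymptotics:
  assumes "0 < p" "p < 1" "0 < q" "q < 1" "0 < mh" "mh < 1"
    and st: "is_stationary p q mh ml \<pi>"
  shows "(\<lambda>i. \<pi> i j / r0 p q mh ^ i / real i ^ j) \<longlonglongrightarrow> Cconst p q mh ^ j * \<pi> 0 0 / fact j"
proof -
  interpret birth_death_recurrence "p * (1 - q) * (1 - mh)" "(1 - p) * (1 - q) * mh"
    "(1 - p) * (1 - q) * (1 - mh) + p * (1 - q) * mh" "r0 p q mh"
    using assms by (intro r0_birth_death_recurrence)
  show ?thesis
  proof (induction j)
    case 0
    have "\<pi> i 0 / r0 p q mh ^ i / real i ^ 0 = \<pi> 0 0" for i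
      using bounded_homogeneous_solution[of "\<lambda>i. \<pi> i 0",
          OF stationary_row_bounded[OF st] stationary_balance_row_0[OF st], of i] r_pos
      by simp
    then show ?case
      by simp
  next
    case (Suc j)
    have "(\<lambda>i. \<pi> i (Suc j) / r0 p q mh ^ i / real i ^ Suc j)
        \<longlonglongrightarrow> Cconst p q mh ^ j * \<pi> 0 0 / fact j * Cconst p q mh / real (Suc j)"
      using bounded_forced_solution_asymptotics[OF stationary_row_bounded[OF st]
          stationary_balance_row_Suc[OF st] Suc.IH]
      by (simp only: Cconst_eq[of p q mh, symmetric])
    also have "Cconst p q mh ^ j * \<pi> 0 0 / fact j * Cconst p q mh / real (Suc j)
        = Cconst p q mh ^ Suc j * \<pi> 0 0 / fact (Suc j)"
      by (simp add: mult_ac)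
    finally show ?case .
  qed
qed

text \<open>Of the hypotheses only positivity of the rates and stationarity are used: the stability
condition merely guarantees that a stationary distribution exists, and \<open>Delta0 p q mh > 0\<close>
already follows from \<open>q > 0\<close>.\<close>

theorem theorem6p1:
  fixes p q mh ml :: real and \<pi> :: "nat \<Rightarrow> nat \<Rightarrow> real" and j :: nat
  assumes "0 < p" "p < 1" "0 < q" "q < 1" "0 < mh" "mh < 1" "0 < ml" "ml < 1"
    and "p + q + mh + ml = 1" and "ml \<le> mh"
    and "p / mh + q / ml < 1"
    and "Delta0 p q mh > 0"
    and "is_stationary p q mh ml \<pi>"
  shows "(\<lambda>i. \<pi> i j) \<sim>[at_top]
         (\<lambda>i. Cconst p q mh ^ j * \<pi> 0 0 / fact j * real i ^ j * r0 p q mh ^ i)"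
proof (rule asymp_equivI')
  define L where "L = Cconst p q mh ^ j * \<pi> 0 0 / fact j"
  have "0 < L"
    using Cconst_pos[OF assms(1-6)] stationary_origin_pos[OF assms(1-8,13)] by (simp add: L_def)
  have "(\<lambda>i. \<pi> i j / r0 p q mh ^ i / real i ^ j) \<longlonglongrightarrow> L"
    unfolding L_def by (rule stationary_row_asymptotics[OF assms(1-6,13)])
  then have "(\<lambda>i. \<pi> i j / r0 p q mh ^ i / real i ^ j / L) \<longlonglongrightarrow> L / L"
    by (rule tendsto_divide[OF _ tendsto_const]) (use \<open>0 < L\<close> in simp)
  then show "(\<lambda>i. \<pi> i j / (L * real i ^ j * r0 p q mh ^ i)) \<longlonglongrightarrow> 1"
    using \<open>0 < L\<close> by (simp add: mult_ac)
qed

end
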